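(* Let $E$ be an elliptic curve, let $V$ be an algebraic subvariety of $E^n$ and let $\phi:E^n\to E^n$ be an isogeny. Then: (i) $\mathrm{Stab}\,\phi^{-1}(V)=\phi^{-1}(\mathrm{Stab}\,V)$; (ii) if $\hat\phi:E^n\to E^n$ is an isogeny and $a\in\mathrm{End}(E)$ is such that $\hat\phi\phi=\phi\hat\phi=[a]$, then $$\left|\mathrm{Stab}\,\hat\phi^{-1}(V)\cap\ker[a]\right|=|\ker\hat\phi|\cdot\left|\mathrm{Stab}\,V\cap\ker\phi\right|.$$
   Context: For a subvariety $X\subseteq E^n$, $\mathrm{Stab}\,X=\{t\in E^n : X+t\subseteq X\}$. $[a]$ denotes multiplication by $a$ on $E^n$, and $|S|$ denotes the cardinality of a finite set $S$. *)

theory Defs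
  imports "HOL-Analysis.Analysis"
begin

text \<open>Abstract model: the elliptic curve E is modelled by its (divisible) abelian group of
points, a type 'a of class ab_group_add; E^n is "'a ^ 'n" with 'n a finite index type.\<close>

definition Stab :: "('a::ab_group_add) set \<Rightarrow> 'a set" where
  "Stab X = {t. (\<lambda>x. x + t) ` X \<subseteq> X}"

definition additive_map :: "('a::ab_group_add \<Rightarrow> 'b::ab_group_add) \<Rightarrow> bool" where
  "additive_map f \<longleftrightarrow> (\<forall>x y. f (x + y) = f x + f y)"

definition ker :: "('a \<Rightarrow> 'b::zero) \<Rightarrow> 'a set" where
  "ker f = {x. f x = 0}"

definition isogeny :: "('a::ab_group_add \<Rightarrow> 'b::ab_group_add) \<Rightarrow> bool" where
  "isogeny f \<longleftrightarrow> additive_map f \<and> surj f \<and> finite (ker f)"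

definition End :: "('a::ab_group_add \<Rightarrow> 'a) set" where
  "End = {a. additive_map a}"

definition mult_end :: "('a \<Rightarrow> 'a) \<Rightarrow> 'a ^ 'n \<Rightarrow> 'a ^ 'n" where
  "mult_end a x = (\<chi> i. a (x $ i))"

end

theory Submission
  imports Defs
begin

text \<open>Translation by t stabilises \<phi>^-1(V) exactly when translation by \<phi>(t) stabilises V,
  because \<phi> is additive and surjective. Every fibre of an isogeny is a coset of its kernel, so
  taking preimages multiplies cardinalities by |ker \<phi>|. For (ii), \<phi>\<psi> = [a] gives
  ker [a] = \<psi>^-1(ker \<phi>); together with (i) for \<psi>, the set on the left is
  \<psi>^-1(Stab V \<inter> ker \<phi>).\<close>

lemma additive_map_iff_additive: "additive_map f \<longleftrightarrow> Modules.additive f"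
  by (simp add: additive_map_def Modules.additive_def)

lemma Stab_vimage:
  assumes "Modules.additive f" and "surj f"
  shows "Stab (f -` V) = f -` Stab V"
proof (rule set_eqI)
  fix t
  have "t \<in> Stab (f -` V) \<longleftrightarrow> (\<forall>x. f x \<in> V \<longrightarrow> f x + f t \<in> V)"
    by (simp add: Stab_def image_subset_iff additive.add[OF assms(1)]) blast
  also have "\<dots> \<longleftrightarrow> (\<forall>y \<in> V. y + f t \<in> V)"
    using \<open>surj f\<close> by (metis surjD)
  also have "\<dots> \<longleftrightarrow> t \<in> f -` Stab V"
    by (auto simp: Stab_def)
  finally show "t \<in> Stab (f -` V) \<longleftrightarrow> t \<in> f -` Stab V" .
qed

lemma vimage_singleton_eq_translate_ker:
  assumes "Modules.additive f" and "f x\<^sub>0 = s"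
  shows "f -` {s} = (\<lambda>k. k + x\<^sub>0) ` ker f"
proof (intro set_eqI iffI)
  fix x assume "x \<in> f -` {s}"
  then have "x - x\<^sub>0 \<in> ker f"
    using assms by (simp add: ker_def additive.diff)
  then show "x \<in> (\<lambda>k. k + x\<^sub>0) ` ker f"
    by (rule rev_image_eqI) simp
next
  fix x assume "x \<in> (\<lambda>k. k + x\<^sub>0) ` ker f"
  then show "x \<in> f -` {s}"
    using assms by (auto simp: ker_def additive.add)
qed

lemma card_vimage_singleton:
  assumes "Modules.additive f" and "s \<in> range f"
  shows "card (f -` {s}) = card (ker f)"
proof -
  obtain x\<^sub>0 where "f x\<^sub>0 = s" using assms(2) by blast
  then have "f -` {s} = (\<lambda>k. k + x\<^sub>0) ` ker f"
    by (rule vimage_singleton_eq_translate_ker[OF assms(1)])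
  then show ?thesis
    by (simp add: card_image)
qed

lemma finite_vimage_singleton:
  assumes "Modules.additive f" and "finite (ker f)"
  shows "finite (f -` {s})"
proof (cases "s \<in> range f")
  case True
  then obtain x\<^sub>0 where "f x\<^sub>0 = s" by blast
  then show ?thesis
    using assms by (simp add: vimage_singleton_eq_translate_ker)
next
  case False
  then have "f -` {s} = {}" by blast
  then show ?thesis by simp
qed

lemma card_vimage_isogeny:
  assumes "isogeny f" and "finite S"
  shows "card (f -` S) = card (ker f) * card S"
proof -
  have f: "Modules.additive f" "surj f" "finite (ker f)"
    using assms(1) by (auto simp: isogeny_def additive_map_iff_additive)
  have "card (f -` S) = card (\<Union>s\<in>S. f -` {s})"
    by (metis vimage_eq_UN)
  also have "\<dots> = (\<Sum>s\<in>S. card (f -` {s}))"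
    using assms(2) finite_vimage_singleton[OF f(1,3)] by (intro card_UN_disjoint) auto
  also have "\<dots> = (\<Sum>s\<in>S. card (ker f))"
    using f by (intro sum.cong) (simp_all add: card_vimage_singleton)
  finally show ?thesis by simp
qed

lemma ker_comp: "ker (g \<circ> f) = f -` ker g"
  by (auto simp: ker_def)

theorem lemma3p2:
  fixes V :: "('a::ab_group_add ^ 'n) set"
    and \<phi> :: "'a ^ 'n \<Rightarrow> 'a ^ 'n"
  assumes "isogeny \<phi>"
  shows "Stab (\<phi> -` V) = \<phi> -` (Stab V) \<and>
    (\<forall>(\<psi> :: 'a ^ 'n \<Rightarrow> 'a ^ 'n) (a :: 'a \<Rightarrow> 'a).
       isogeny \<psi> \<and> a \<in> End \<and> \<psi> \<circ> \<phi> = mult_end a \<and> \<phi> \<circ> \<psi> = mult_end a \<longrightarrow>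
       card (Stab (\<psi> -` V) \<inter> ker (mult_end a)) = card (ker \<psi>) * card (Stab V \<inter> ker \<phi>))"
proof (intro conjI allI impI)
  show "Stab (\<phi> -` V) = \<phi> -` Stab V"
    using assms by (simp add: Stab_vimage isogeny_def additive_map_iff_additive)
next
  fix \<psi> :: "'a ^ 'n \<Rightarrow> 'a ^ 'n" and a :: "'a \<Rightarrow> 'a"
  assume "isogeny \<psi> \<and> a \<in> End \<and> \<psi> \<circ> \<phi> = mult_end a \<and> \<phi> \<circ> \<psi> = mult_end a"
  then have \<psi>: "isogeny \<psi>" and "\<phi> \<circ> \<psi> = mult_end a" by simp_all
  then have "ker (mult_end a) = \<psi> -` ker \<phi>"
    by (metis ker_comp)
  moreover have "Stab (\<psi> -` V) = \<psi> -` Stab V"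
    using \<psi> by (simp add: Stab_vimage isogeny_def additive_map_iff_additive)
  ultimately have "Stab (\<psi> -` V) \<inter> ker (mult_end a) = \<psi> -` (Stab V \<inter> ker \<phi>)"
    by simp
  moreover have "finite (Stab V \<inter> ker \<phi>)"
    using assms by (simp add: isogeny_def)
  ultimately show "card (Stab (\<psi> -` V) \<inter> ker (mult_end a)) = card (ker \<psi>) * card (Stab V \<inter> ker \<phi>)"
    by (simp only: card_vimage_isogeny[OF \<psi>])
qed

end
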